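(* Let $L \geq 2$, $m = L+1$, $\gamma = (L+1)^3$, and for $i \in \{0,\ldots,L\}$, $k\in[m]$ let $\pi_i(A_k) = w_i(k)/\sum_{h=1}^m w_i(h)$ with $w_i(k) = \gamma^{2(i+1)k - k^2+1} + \sum_{r=0}^L\gamma^{(2r+1)(i+1)-r^2-r}$. Let $\overline{\pi}(\xi) = \prod_{i=0}^L \pi_i(A_{\xi_i})$ for $\xi\in[m]^{L+1}$, let $\lambda = (1, 2, \ldots, m)$ (i.e. $\lambda_i = i+1$), let $\mathcal{X}_\lambda$ be the set of states reachable from $\lambda$ by finitely many swaps of adjacent levels, and $\overline{\pi}_\lambda = \overline{\pi}/\overline{\pi}(\mathcal{X}_\lambda)$ on $\mathcal{X}_\lambda$. Let $S \subseteq \mathcal{X}_\lambda$ be the set of states $\xi$ for which there is a sequence $\lambda = \tau^0, \ldots, \tau^N = \xi$, each obtained from the previous by swapping the entries of two adjacent levels, such that every $\tau^s$ differs from $\lambda$ in at most $\lfloor\log_2 L\rfloor - 1$ coordinates. Then $\overline{\pi}_\lambda(S) > \frac{1}{2e}$.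
   Context: A swap of adjacent levels maps $\xi$ to $(j-1,j)\xi$, the vector with entries at positions $j-1$ and $j$ exchanged, $j\in\{1,\ldots,L\}$. Two states differ in coordinate $\ell$ if their $\ell$-th entries are unequal. *)

theory Defs
  imports Complex_Main
begin

definition gam :: "nat \<Rightarrow> real" where
  "gam L = (real L + 1) ^ 3"

definition wt :: "nat \<Rightarrow> nat \<Rightarrow> nat \<Rightarrow> real" where
  "wt L i k = gam L powi (2 * (int i + 1) * int k - (int k)\<^sup>2 + 1)
     + (\<Sum>r=0..L. gam L powi ((2 * int r + 1) * (int i + 1) - (int r)\<^sup>2 - int r))"

definition pi_lvl :: "nat \<Rightarrow> nat \<Rightarrow> nat \<Rightarrow> real" where
  "pi_lvl L i k = wt L i k / (\<Sum>h=1..L+1. wt L i h)"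

definition pibar :: "nat \<Rightarrow> nat list \<Rightarrow> real" where
  "pibar L xi = (\<Prod>i=0..L. pi_lvl L i (xi ! i))"

definition lam :: "nat \<Rightarrow> nat list" where
  "lam L = map Suc [0..<L+1]"

definition swap_adj :: "nat list \<Rightarrow> nat \<Rightarrow> nat list" where
  "swap_adj xi j = xi[j - 1 := xi ! j, j := xi ! (j - 1)]"

definition adj_step :: "nat \<Rightarrow> nat list \<Rightarrow> nat list \<Rightarrow> bool" where
  "adj_step L xi eta \<longleftrightarrow> (\<exists>j\<in>{1..L}. eta = swap_adj xi j)"

definition Xlam :: "nat \<Rightarrow> nat list set" where
  "Xlam L = {xi. (adj_step L)\<^sup>*\<^sup>* (lam L) xi}"

definition ndiff :: "nat \<Rightarrow> nat list \<Rightarrow> nat list \<Rightarrow> nat" where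
  "ndiff L xi eta = card {l. l \<le> L \<and> xi ! l \<noteq> eta ! l}"

definition Sset :: "nat \<Rightarrow> nat list set" where
  "Sset L = {xi. \<exists>taus. taus \<noteq> [] \<and> hd taus = lam L \<and> last taus = xi
      \<and> (\<forall>s. Suc s < length taus \<longrightarrow> adj_step L (taus ! s) (taus ! Suc s))
      \<and> (\<forall>tau\<in>set taus. int (ndiff L tau (lam L)) \<le> \<lfloor>log 2 (real L)\<rfloor> - 1)}"

definition pibar_lam :: "nat \<Rightarrow> nat list set \<Rightarrow> real" where
  "pibar_lam L A = (\<Sum>xi\<in>A. pibar L xi) / (\<Sum>xi\<in>Xlam L. pibar L xi)"

end

theory Submission
  imports Defs
begin

text \<open>At level i the weight of A_(i+1) carries the exponent (i+1)^2 + 1, whereas every other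
exponent occurring in w_i is at most (i+1)^2. So each of the L other weights is at most
(L+2) gamma^((i+1)^2), and as gamma = (L+1)^3 \<ge> L^2 (L+2), the weight w_i(i+1) is at least L
times their sum, i.e. pi_i(A_(i+1)) \<ge> L/(L+1). Hence pibar(lambda) \<ge> (L/(L+1))^(L+1) > 1/(2e).
Finally lambda lies in S (take N = 0), and normalising by pibar(X_lambda) \<le> 1 can only
increase its mass.\<close>

lemma int_two_mult_sub_sq_le_sq:
  fixes k n :: int
  assumes "k \<noteq> n"
  shows "2 * n * k - k\<^sup>2 + 1 \<le> n\<^sup>2"
proof -
  have "1 \<le> \<bar>k - n\<bar>"
    using assms by linarith
  then have "1 \<le> \<bar>k - n\<bar>\<^sup>2"
    by (rule one_le_power)
  then show ?thesis
    by (simp add: power2_eq_square algebra_simps)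
qed

lemma int_odd_mult_sub_pronic_le_sq:
  fixes r n :: int
  shows "(2 * r + 1) * n - r\<^sup>2 - r \<le> n\<^sup>2"
proof -
  have "0 \<le> (r - n) * (r - n + 1)"
    by (auto simp: zero_le_mult_iff)
  then show ?thesis
    by (simp add: power2_eq_square algebra_simps)
qed

lemma gam_ge_1: "1 \<le> gam L"
  unfolding gam_def by simp

lemma wt_pos: "0 < wt L i k"
proof -
  have "0 < gam L powi e" for e
    using gam_ge_1[of L] by simp
  then show ?thesis
    unfolding wt_def by (intro add_pos_nonneg sum_nonneg) (auto intro: less_imp_le)
qed

lemma wt_diag_ge: "gam L * gam L powi ((int i + 1)\<^sup>2) \<le> wt L i (i + 1)"
proof -
  have "2 * (int i + 1) * int (i + 1) - (int (i + 1))\<^sup>2 + 1 = (int i + 1)\<^sup>2 + 1"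
    by (simp add: power2_eq_square algebra_simps)
  moreover have "gam L powi ((int i + 1)\<^sup>2 + 1) = gam L * gam L powi ((int i + 1)\<^sup>2)"
    using gam_ge_1[of L] by (simp add: power_int_add)
  moreover have "0 \<le> (\<Sum>r=0..L. gam L powi ((2 * int r + 1) * (int i + 1) - (int r)\<^sup>2 - int r))"
    using gam_ge_1[of L] by (intro sum_nonneg) simp
  ultimately show ?thesis
    unfolding wt_def by simp
qed

lemma wt_off_diag_le:
  assumes "k \<noteq> i + 1"
  shows "wt L i k \<le> (real L + 2) * gam L powi ((int i + 1)\<^sup>2)"
proof -
  let ?G = "gam L powi ((int i + 1)\<^sup>2)"
  have "gam L powi (2 * (int i + 1) * int k - (int k)\<^sup>2 + 1) \<le> ?G"
    using assms by (intro power_int_increasing int_two_mult_sub_sq_le_sq gam_ge_1) auto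
  moreover have "(\<Sum>r=0..L. gam L powi ((2 * int r + 1) * (int i + 1) - (int r)\<^sup>2 - int r))
      \<le> (\<Sum>r=0..L. ?G)"
    by (intro sum_mono power_int_increasing int_odd_mult_sub_pronic_le_sq gam_ge_1)
  ultimately show ?thesis
    unfolding wt_def by (simp add: algebra_simps)
qed

lemma dominant_term_fraction_ge:
  fixes w :: "'a \<Rightarrow> real"
  assumes "finite A" "a \<in> A" "\<And>x. x \<in> A \<Longrightarrow> 0 \<le> w x" "0 < w a" "0 \<le> c"
    and dominant: "c * (\<Sum>x\<in>A - {a}. w x) \<le> w a"
  shows "c / (c + 1) \<le> w a / (\<Sum>x\<in>A. w x)"
proof -
  let ?R = "\<Sum>x\<in>A - {a}. w x"
  have sum_split: "(\<Sum>x\<in>A. w x) = w a + ?R"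
    using assms(1,2) by (rule sum.remove)
  have "0 \<le> ?R"
    using assms(3) by (intro sum_nonneg) auto
  moreover have "c * (w a + ?R) \<le> w a * (c + 1)"
    using dominant by (simp add: algebra_simps)
  ultimately show ?thesis
    unfolding sum_split using assms(4,5) by (simp add: frac_le_eq divide_le_0_iff algebra_simps)
qed

lemma pi_lvl_diag_ge:
  assumes "i \<le> L"
  shows "real L / (real L + 1) \<le> pi_lvl L i (i + 1)"
proof -
  let ?G = "gam L powi ((int i + 1)\<^sup>2)"
  have G_pos: "0 < ?G"
    using gam_ge_1[of L] by simp
  have diag: "i + 1 \<in> {1..L+1}"
    using assms by simp
  have "(\<Sum>h\<in>{1..L+1} - {i+1}. wt L i h) \<le> (\<Sum>h\<in>{1..L+1} - {i+1}. (real L + 2) * ?G)"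
    by (intro sum_mono wt_off_diag_le) auto
  also have "\<dots> = real L * (real L + 2) * ?G"
    using diag by simp
  finally have "real L * (\<Sum>h\<in>{1..L+1} - {i+1}. wt L i h) \<le> real L * real L * (real L + 2) * ?G"
    by (simp add: mult_left_mono mult.assoc)
  also have "\<dots> \<le> gam L * ?G"
    using G_pos unfolding gam_def by (intro mult_right_mono) (auto simp: power3_eq_cube algebra_simps)
  also have "\<dots> \<le> wt L i (i + 1)"
    by (rule wt_diag_ge)
  finally show ?thesis
    unfolding pi_lvl_def using diag
    by (intro dominant_term_fraction_ge) (auto intro: less_imp_le wt_pos)
qed

lemma lam_nth: "i \<le> L \<Longrightarrow> lam L ! i = i + 1"
  unfolding lam_def by (simp add: nth_append less_Suc_eq_le del: upt_Suc)

lemma pibar_at_lam_ge: "(real L / (real L + 1)) ^ (L + 1) \<le> pibar L (lam L)"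
proof -
  have "real L / (real L + 1) \<le> pi_lvl L i (lam L ! i)" if "i \<le> L" for i
    using pi_lvl_diag_ge[OF that] lam_nth[OF that] by simp
  then have "(\<Prod>i=0..L. real L / (real L + 1)) \<le> (\<Prod>i=0..L. pi_lvl L i (lam L ! i))"
    by (intro prod_mono) auto
  then show ?thesis
    unfolding pibar_def by simp
qed

lemma inverse_2e_less_frac_power:
  assumes "1 \<le> n"
  shows "1 / (2 * exp 1) < (real n / (real n + 1)) ^ (n + 1)"
proof -
  have n_pos: "0 < real n"
    using assms by simp
  have frac_eq: "real n / (real n + 1) = inverse (1 + 1 / real n)"
    using n_pos by (simp add: field_simps)
  have "(1 + 1 / real n) powr real n = (1 + 1 / real n) ^ n"
    using n_pos by (intro powr_realpow add_pos_nonneg) simp_all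
  then have "(1 + 1 / real n) ^ n < exp 1"
    using exp_1_gt_powr[OF n_pos] by simp
  then have "inverse (exp 1) < (real n / (real n + 1)) ^ n"
    unfolding frac_eq power_inverse using n_pos
    by (intro less_imp_inverse_less) (auto intro!: zero_less_power add_pos_nonneg)
  moreover have "1 / 2 \<le> real n / (real n + 1)"
    using assms by (simp add: field_simps)
  ultimately have "1 / 2 * inverse (exp 1) < real n / (real n + 1) * (real n / (real n + 1)) ^ n"
    by (intro mult_le_less_imp_less) auto
  then show ?thesis
    by (simp add: field_simps)
qed

lemma prod_sum_lists_length:
  fixes f :: "nat \<Rightarrow> 'a \<Rightarrow> 'b::comm_semiring_1"
  assumes "finite A"
  shows "(\<Prod>i<n. \<Sum>a\<in>A. f i a) = (\<Sum>xs\<in>{xs. set xs \<subseteq> A \<and> length xs = n}. \<Prod>i<n. f i (xs ! i))"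
proof (induction n arbitrary: f)
  case 0
  have "{xs. set xs \<subseteq> A \<and> length xs = 0} = {[]}"
    by auto
  then show ?case
    by simp
next
  case (Suc n)
  let ?Xs = "{xs. set xs \<subseteq> A \<and> length xs = n}"
  have cons_image: "{xs. set xs \<subseteq> A \<and> length xs = Suc n} = (\<lambda>(x, ys). x # ys) ` (A \<times> ?Xs)"
    by (auto simp: length_Suc_conv image_def)
  have cons_inj: "inj_on (\<lambda>(x, ys). x # ys) (A \<times> ?Xs)"
    by (auto simp: inj_on_def)
  have "(\<Prod>i<Suc n. \<Sum>a\<in>A. f i a) = (\<Sum>x\<in>A. f 0 x) * (\<Prod>i<n. \<Sum>a\<in>A. f (Suc i) a)"
    by (simp only: prod.lessThan_Suc_shift)
  also have "\<dots> = (\<Sum>x\<in>A. f 0 x) * (\<Sum>ys\<in>?Xs. \<Prod>i<n. f (Suc i) (ys ! i))"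
    by (simp only: Suc.IH)
  also have "\<dots> = (\<Sum>(x, ys)\<in>A \<times> ?Xs. f 0 x * (\<Prod>i<n. f (Suc i) (ys ! i)))"
    by (simp add: sum_product sum.cartesian_product)
  also have "\<dots> = (\<Sum>(x, ys)\<in>A \<times> ?Xs. \<Prod>i<Suc n. f i ((x # ys) ! i))"
    by (simp only: prod.lessThan_Suc_shift nth_Cons_0 nth_Cons_Suc)
  also have "\<dots> = (\<Sum>xs\<in>{xs. set xs \<subseteq> A \<and> length xs = Suc n}. \<Prod>i<Suc n. f i (xs ! i))"
    unfolding cons_image by (subst sum.reindex[OF cons_inj]) (simp add: case_prod_beta)
  finally show ?case .
qed

definition states :: "nat \<Rightarrow> nat list set" where
  "states L = {xs. set xs \<subseteq> {1..L+1} \<and> length xs = L + 1}"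

lemma finite_states: "finite (states L)"
  unfolding states_def by (intro finite_lists_length_eq) simp

lemma lam_in_states: "lam L \<in> states L"
  unfolding states_def lam_def by auto

lemma sum_pibar_states: "(\<Sum>xi\<in>states L. pibar L xi) = 1"
proof -
  have "(\<Sum>k\<in>{1..L+1}. pi_lvl L i k) = 1" for i
  proof -
    have "0 < (\<Sum>h=1..L+1. wt L i h)"
      by (intro sum_pos wt_pos) auto
    then show ?thesis
      unfolding pi_lvl_def by (simp add: sum_divide_distrib[symmetric])
  qed
  then have "1 = (\<Prod>i<L+1. \<Sum>k\<in>{1..L+1}. pi_lvl L i k)"
    by simp
  also have "\<dots> = (\<Sum>xi\<in>states L. \<Prod>i<L+1. pi_lvl L i (xi ! i))"
    unfolding states_def by (rule prod_sum_lists_length) simp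
  also have "\<dots> = (\<Sum>xi\<in>states L. pibar L xi)"
    unfolding pibar_def by (simp add: atLeast0AtMost lessThan_Suc_atMost)
  finally show ?thesis ..
qed

lemma pibar_pos: "0 < pibar L xi"
  unfolding pibar_def pi_lvl_def by (intro prod_pos divide_pos_pos sum_pos wt_pos) auto

lemma set_swap_adj_subset:
  assumes "j < length xs"
  shows "set (swap_adj xs j) \<subseteq> set xs"
proof -
  have "xs ! j \<in> set xs" "xs ! (j - 1) \<in> set xs"
    using assms by auto
  then show ?thesis
    unfolding swap_adj_def by (auto dest!: set_update_subset_insert[THEN subsetD])
qed

lemma adj_step_states:
  assumes "xi \<in> states L" "adj_step L xi eta"
  shows "eta \<in> states L"
proof -
  obtain j where "j \<in> {1..L}" "eta = swap_adj xi j"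
    using assms(2) unfolding adj_step_def by blast
  moreover have "length xi = L + 1"
    using assms(1) unfolding states_def by simp
  ultimately show ?thesis
    using assms(1) set_swap_adj_subset[of j xi] unfolding states_def swap_adj_def by auto
qed

lemma Xlam_subset_states: "Xlam L \<subseteq> states L"
proof
  fix xi
  assume "xi \<in> Xlam L"
  then have "(adj_step L)\<^sup>*\<^sup>* (lam L) xi"
    unfolding Xlam_def by simp
  then show "xi \<in> states L"
    by (induction rule: rtranclp_induct) (auto intro: lam_in_states adj_step_states)
qed

lemma rtranclp_hd_last_chain:
  assumes "xs \<noteq> []" "\<And>s. Suc s < length xs \<Longrightarrow> R (xs ! s) (xs ! Suc s)"
  shows "R\<^sup>*\<^sup>* (hd xs) (last xs)"
proof -
  have "R\<^sup>*\<^sup>* (hd xs) (xs ! s)" if "s < length xs" for s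
    using that
  proof (induction s)
    case 0
    then show ?case
      by (simp add: hd_conv_nth)
  next
    case (Suc s)
    then show ?case
      using assms(2) by (auto intro: rtranclp.rtrancl_into_rtrancl)
  qed
  then show ?thesis
    using assms(1) by (simp add: last_conv_nth)
qed

lemma Sset_subset_Xlam: "Sset L \<subseteq> Xlam L"
  unfolding Sset_def Xlam_def by (auto dest: rtranclp_hd_last_chain[where R = "adj_step L"])

lemma finite_Xlam: "finite (Xlam L)"
  using Xlam_subset_states finite_states by (rule finite_subset)

lemma sum_pibar_Xlam_le_1: "(\<Sum>xi\<in>Xlam L. pibar L xi) \<le> 1"
proof -
  have "(\<Sum>xi\<in>Xlam L. pibar L xi) \<le> (\<Sum>xi\<in>states L. pibar L xi)"
    using finite_states Xlam_subset_states by (rule sum_mono2) (simp add: less_imp_le pibar_pos)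
  then show ?thesis
    by (simp only: sum_pibar_states)
qed

lemma sum_pibar_le_pibar_lam: "(\<Sum>xi\<in>A. pibar L xi) \<le> pibar_lam L A"
proof -
  have "lam L \<in> Xlam L"
    unfolding Xlam_def by simp
  then have "0 < (\<Sum>xi\<in>Xlam L. pibar L xi)"
    using finite_Xlam by (intro sum_pos2[where i = "lam L"] pibar_pos less_imp_le)
  moreover have "0 \<le> (\<Sum>xi\<in>A. pibar L xi)"
    by (intro sum_nonneg less_imp_le pibar_pos)
  ultimately show ?thesis
    unfolding pibar_lam_def using sum_pibar_Xlam_le_1 by (simp add: le_divide_eq mult_left_le)
qed

lemma lam_in_Sset:
  assumes "2 \<le> L"
  shows "lam L \<in> Sset L"
proof -
  have "1 \<le> log 2 (real L)"
    using assms by simp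
  then have "1 \<le> \<lfloor>log 2 (real L)\<rfloor>"
    by linarith
  moreover have "ndiff L (lam L) (lam L) = 0"
    unfolding ndiff_def by simp
  ultimately show ?thesis
    unfolding Sset_def by (intro CollectI exI[where x = "[lam L]"]) simp
qed

theorem lemma13:
  fixes L :: nat
  assumes "L \<ge> 2"
  shows "pibar_lam L (Sset L) > 1 / (2 * exp 1)"
proof -
  have "1 / (2 * exp 1) < (real L / (real L + 1)) ^ (L + 1)"
    using assms by (intro inverse_2e_less_frac_power) simp
  also have "\<dots> \<le> pibar L (lam L)"
    by (rule pibar_at_lam_ge)
  also have "\<dots> \<le> (\<Sum>xi\<in>Sset L. pibar L xi)"
    using lam_in_Sset[OF assms] finite_subset[OF Sset_subset_Xlam finite_Xlam]
    by (intro member_le_sum less_imp_le pibar_pos)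
  also have "\<dots> \<le> pibar_lam L (Sset L)"
    by (rule sum_pibar_le_pibar_lam)
  finally show ?thesis .
qed

end
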